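(* Let $\bm\sigma=\sigma_1\bm e_1+\dots+\sigma_r\bm e_r\in\mathbb{Z}^r$ be a changemaker vector with $\sigma_r\ge2$ and let $L=\langle\bm\sigma\rangle^\perp\subseteq\mathbb{Z}^r$. Then any obtuse superbase for $L$ contains at most one reducible vector. In particular, any obtuse superbase for $L$ contains a basis of $L$ consisting of irreducible vectors.
   Context: $\mathbb{Z}^r$ has the standard pairing. A changemaker vector is $\bm\sigma=\sum\sigma_i\bm e_i$ (in some orthonormal basis) with $\sigma_1=1$ and $\sigma_{i-1}\le\sigma_i\le1+\sigma_1+\dots+\sigma_{i-1}$. An obtuse superbase of a rank-$k$ lattice $L$ is a spanning set $\{v_0,\dots,v_k\}$ with $v_i\cdot v_j\le 0$ for $i\ne j$ and $\sum v_i=0$. A non-zero $v\in L$ is irreducible if whenever $v=x+y$ with $x,y\in L$ non-zero we have $x\cdot y\le -1$; otherwise it is reducible. *)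

theory Defs
  imports Main
begin

text \<open>Vectors of Z^r are represented as functions nat => int supported on {0..<r};
  coordinate i (0-based) corresponds to e_(i+1).\<close>

definition zvec :: "nat \<Rightarrow> (nat \<Rightarrow> int) set" where
  "zvec r = {v. \<forall>i\<ge>r. v i = 0}"

definition dot :: "nat \<Rightarrow> (nat \<Rightarrow> int) \<Rightarrow> (nat \<Rightarrow> int) \<Rightarrow> int" where
  "dot r v w = (\<Sum>i<r. v i * w i)"

definition changemaker :: "nat \<Rightarrow> (nat \<Rightarrow> int) \<Rightarrow> bool" where
  "changemaker r \<sigma> \<longleftrightarrow> r \<ge> 1 \<and> \<sigma> \<in> zvec r \<and> \<sigma> 0 = 1 \<and>
     (\<forall>i. 1 \<le> i \<and> i < r \<longrightarrow> \<sigma> (i - 1) \<le> \<sigma> i \<and> \<sigma> i \<le> 1 + (\<Sum>j<i. \<sigma> j))"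

definition perp_lattice :: "nat \<Rightarrow> (nat \<Rightarrow> int) \<Rightarrow> (nat \<Rightarrow> int) set" where
  "perp_lattice r \<sigma> = {v \<in> zvec r. dot r v \<sigma> = 0}"

definition lincomb :: "nat set \<Rightarrow> (nat \<Rightarrow> int) \<Rightarrow> (nat \<Rightarrow> nat \<Rightarrow> int) \<Rightarrow> nat \<Rightarrow> int" where
  "lincomb I c v = (\<lambda>t. \<Sum>i\<in>I. c i * v i t)"

definition spans :: "(nat \<Rightarrow> int) set \<Rightarrow> nat set \<Rightarrow> (nat \<Rightarrow> nat \<Rightarrow> int) \<Rightarrow> bool" where
  "spans L I v \<longleftrightarrow> (\<forall>i\<in>I. v i \<in> L) \<and> (\<forall>w\<in>L. \<exists>c. w = lincomb I c v)"

definition lin_indep :: "nat set \<Rightarrow> (nat \<Rightarrow> nat \<Rightarrow> int) \<Rightarrow> bool" where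
  "lin_indep I v \<longleftrightarrow> (\<forall>c. lincomb I c v = (\<lambda>_. 0) \<longrightarrow> (\<forall>i\<in>I. c i = 0))"

definition is_basis :: "(nat \<Rightarrow> int) set \<Rightarrow> nat set \<Rightarrow> (nat \<Rightarrow> nat \<Rightarrow> int) \<Rightarrow> bool" where
  "is_basis L I v \<longleftrightarrow> spans L I v \<and> lin_indep I v"

definition obtuse_superbase ::
  "nat \<Rightarrow> (nat \<Rightarrow> int) set \<Rightarrow> nat \<Rightarrow> (nat \<Rightarrow> nat \<Rightarrow> int) \<Rightarrow> bool" where
  "obtuse_superbase r L k v \<longleftrightarrow> spans L {..k} v \<and>
     (\<forall>i\<le>k. \<forall>j\<le>k. i \<noteq> j \<longrightarrow> dot r (v i) (v j) \<le> 0) \<and>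
     lincomb {..k} (\<lambda>_. 1) v = (\<lambda>_. 0)"

definition irreducible_vec :: "nat \<Rightarrow> (nat \<Rightarrow> int) set \<Rightarrow> (nat \<Rightarrow> int) \<Rightarrow> bool" where
  "irreducible_vec r L v \<longleftrightarrow> v \<in> L \<and> v \<noteq> (\<lambda>_. 0) \<and>
     (\<forall>x\<in>L. \<forall>y\<in>L. x \<noteq> (\<lambda>_. 0) \<and> y \<noteq> (\<lambda>_. 0) \<and> v = (\<lambda>t. x t + y t)
        \<longrightarrow> dot r x y \<le> -1)"

definition reducible_vec :: "nat \<Rightarrow> (nat \<Rightarrow> int) set \<Rightarrow> (nat \<Rightarrow> int) \<Rightarrow> bool" where
  "reducible_vec r L v \<longleftrightarrow> v \<in> L \<and> v \<noteq> (\<lambda>_. 0) \<and> \<not> irreducible_vec r L v"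

end

theory Submission
  imports Defs "HOL-Library.Function_Algebras" Complex_Main
begin

text \<open>
  Call two vectors of an obtuse superbase of \<open>\<Lambda> = \<sigma>\<^sup>\<bottom>\<close> adjacent if they are not orthogonal.
  The resulting graph is connected, since otherwise \<open>\<Lambda>\<close> would be generated by fewer than
  \<open>rank \<Lambda>\<close> vectors. Expanding \<open>x\<close> and \<open>y\<close> in the superbase, \<open>2 x \<cdot> y\<close> is a sum of terms
  \<open>-(v\<^sub>s \<cdot> v\<^sub>t)(a\<^sub>s - a\<^sub>t)(b\<^sub>s - b\<^sub>t)\<close>. If \<open>v\<^sub>i = x + y\<close> with \<open>x \<cdot> y \<ge> 0\<close> they all vanish, so the
  coefficients of \<open>x\<close> are constant along edges avoiding \<open>v\<^sub>i\<close>; as \<open>x\<close> is not a multiple of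
  \<open>v\<^sub>i\<close>, this makes \<open>v\<^sub>i\<close> a cut vertex. A cut \<open>(A, B)\<close> at \<open>v\<^sub>i\<close> splits \<open>\<Lambda>\<close> orthogonally into
  the spans of \<open>A\<close> and \<open>B\<close>, and every irreducible vector lies in one of them.

  The standard basis of the changemaker lattice consists of irreducible vectors, and its own
  adjacency graph has at most two components, one containing the first vector and one the
  vector at the exceptional index. Each cut must separate these two, so all cuts yield the same
  two spans; then a second cut vertex \<open>v\<^sub>j\<close>, lying
  on one side of the cut at \<open>v\<^sub>i\<close>, would make the vectors on one side of its own cut sum to
  zero, contradicting connectivity.
\<close>

section \<open>Integer combinations and the dot product\<close>

lemma dot_sym: "dot r x y = dot r y x"
  unfolding dot_def by (simp add: mult.commute)

lemma dot_lincomb_right: "dot r x (lincomb I c g) = (\<Sum>i\<in>I. c i * dot r x (g i))"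
  unfolding dot_def lincomb_def
  by (simp add: sum_distrib_left sum_distrib_right mult_ac sum.swap[of _ I])

lemma dot_lincomb_left: "dot r (lincomb I c g) x = (\<Sum>i\<in>I. c i * dot r (g i) x)"
  using dot_lincomb_right[of r x I c g] by (simp add: dot_sym)

lemma dot_diff_left: "dot r (\<lambda>t. x t - y t) z = dot r x z - dot r y z"
  unfolding dot_def by (simp add: algebra_simps sum_subtractf)

lemma dot_scale_left: "dot r (\<lambda>t. a * x t) z = a * dot r x z"
  unfolding dot_def by (simp add: algebra_simps sum_distrib_left)

lemma dot_zero_left: "dot r (\<lambda>_. 0) x = 0"
  by (simp add: dot_def)

lemma dot_self_eq_0:
  assumes "x \<in> zvec r" "dot r x x = 0" shows "x = (\<lambda>_. 0)"
proof
  fix u show "x u = 0"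
  proof (cases "u < r")
    case True
    have "\<forall>i\<in>{..<r}. x i * x i = 0"
      using assms(2) by (subst sum_nonneg_eq_0_iff[symmetric]) (auto simp: dot_def)
    with True show ?thesis by auto
  qed (use assms(1) in \<open>simp add: zvec_def\<close>)
qed

lemma lincomb_diff: "(\<lambda>t. lincomb I a g t - lincomb I b g t) = lincomb I (\<lambda>i. a i - b i) g"
  unfolding lincomb_def by (simp add: algebra_simps sum_subtractf)

lemma lincomb_add: "(\<lambda>t. lincomb I a g t + lincomb I b g t) = lincomb I (\<lambda>i. a i + b i) g"
  unfolding lincomb_def by (simp add: algebra_simps sum.distrib)

lemma lincomb_scale: "(\<lambda>t. k * lincomb I a g t) = lincomb I (\<lambda>i. k * a i) g"
  unfolding lincomb_def by (simp add: algebra_simps sum_distrib_left)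

lemma lincomb_cong: "(\<And>i. i \<in> I \<Longrightarrow> a i = b i) \<Longrightarrow> lincomb I a g = lincomb I b g"
  unfolding lincomb_def by auto

lemma lincomb_insert:
  "finite I \<Longrightarrow> i \<notin> I \<Longrightarrow> lincomb (insert i I) c g = (\<lambda>t. c i * g i t + lincomb I c g t)"
  unfolding lincomb_def by simp

lemma lincomb_union:
  "finite A \<Longrightarrow> finite B \<Longrightarrow> A \<inter> B = {} \<Longrightarrow>
    lincomb (A \<union> B) c g = (\<lambda>t. lincomb A c g t + lincomb B c g t)"
  unfolding lincomb_def by (simp add: sum.union_disjoint)

lemma lincomb_indicator: "finite X \<Longrightarrow> i \<in> X \<Longrightarrow> lincomb X (\<lambda>s. of_bool (s = i)) g = g i"
  unfolding lincomb_def by (simp add: if_distrib cong: if_cong)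

lemma lincomb_subset:
  "finite X \<Longrightarrow> Y \<subseteq> X \<Longrightarrow> (\<And>s. s \<in> X - Y \<Longrightarrow> c s = 0) \<Longrightarrow> lincomb X c g = lincomb Y c g"
  unfolding lincomb_def by (auto intro!: sum.mono_neutral_right)

lemma lincomb_shift_by_zero_sum:
  assumes "finite X" "C \<subseteq> X" "lincomb C (\<lambda>_. 1) g = (\<lambda>_. 0)"
  shows "lincomb X (\<lambda>s. c s - a * of_bool (s \<in> C)) g = lincomb X c g"
proof -
  have "lincomb X (\<lambda>s. of_bool (s \<in> C)) g = lincomb C (\<lambda>_. 1) g"
    using assms(1,2) by (subst lincomb_subset[of X C]) (auto intro: lincomb_cong)
  then have "lincomb X (\<lambda>s. a * of_bool (s \<in> C)) g = (\<lambda>_. 0)"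
    using assms(3) lincomb_scale[of a X "\<lambda>s. of_bool (s \<in> C)" g] by simp
  then show ?thesis
    using lincomb_diff[of X c g "\<lambda>s. a * of_bool (s \<in> C)"] by simp
qed

lemma lincomb_in_zvec: "(\<And>i. i \<in> I \<Longrightarrow> g i \<in> zvec r) \<Longrightarrow> lincomb I c g \<in> zvec r"
  unfolding lincomb_def zvec_def by auto

lemma lincomb_in_perp_lattice:
  assumes "finite I" "\<And>i. i \<in> I \<Longrightarrow> g i \<in> perp_lattice r s"
  shows "lincomb I c g \<in> perp_lattice r s"
  using assms lincomb_in_zvec[of I g r c] by (auto simp: perp_lattice_def dot_lincomb_left)

lemma int_mult_nonpos_if_abs_add_le_1: "\<bar>(a::int) + b\<bar> \<le> 1 \<Longrightarrow> a * b \<le> 0"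
  by (smt (verit) mult_nonneg_nonpos mult_nonpos_nonneg mult_nonneg_nonneg mult_nonpos_nonpos)

lemma sum_nonpos_eq_0:
  fixes f :: "'a \<Rightarrow> int"
  assumes "finite A" "\<And>u. u \<in> A \<Longrightarrow> f u \<le> 0" "0 \<le> sum f A" "u \<in> A"
  shows "f u = 0"
  using assms sum_nonpos[of A f] sum_nonneg_eq_0_iff[of A "\<lambda>u. - f u"] by (simp add: sum_negf)

lemma sum_nonpos_le_term:
  fixes f :: "'a \<Rightarrow> int"
  assumes "finite A" "\<And>u. u \<in> A \<Longrightarrow> f u \<le> 0" "u \<in> A"
  shows "sum f A \<le> f u"
  using assms sum.remove[of A u f] sum_nonpos[of "A - {u}" f] by simp

lemma triangular_family_independent:
  fixes W :: "nat \<Rightarrow> nat \<Rightarrow> int"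
  assumes "\<And>t. t \<in> {1..m} \<Longrightarrow> W t t = 1"
    and "\<And>t u. t \<in> {1..m} \<Longrightarrow> t < u \<Longrightarrow> W t u = 0"
    and "\<And>u. (\<Sum>t\<in>{1..m}. a t * real_of_int (W t u)) = 0"
  shows "\<forall>t\<in>{1..m}. a t = 0"
  using assms
proof (induction m)
  case (Suc m)
  have split: "{1..Suc m} = insert (Suc m) {1..m}" by auto
  have "(\<Sum>t\<in>{1..Suc m}. a t * real_of_int (W t (Suc m))) = a (Suc m)"
    unfolding split using Suc.prems(1,2) by simp
  then have top: "a (Suc m) = 0" using Suc.prems(3) by simp
  have "\<forall>t\<in>{1..m}. a t = 0"
  proof (rule Suc.IH)
    fix u
    show "(\<Sum>t\<in>{1..m}. a t * real_of_int (W t u)) = 0"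
      using Suc.prems(3)[of u] top unfolding split by simp
  qed (use Suc.prems(1,2) in auto)
  with top show ?case unfolding split by blast
qed simp

text \<open>Ranks of integer vector families are compared in the real vector space \<open>nat \<Rightarrow> real\<close>.\<close>

interpretation real_fun: vector_space "\<lambda>(a::real) (f::nat \<Rightarrow> real). (\<lambda>u. a * f u)"
  by unfold_locales (auto simp: fun_eq_iff algebra_simps)

lemma sum_fun_apply: "(\<Sum>i\<in>I. F i) u = (\<Sum>i\<in>I. F i u)"
  by (induction I rule: infinite_finite_induct) auto

lemma triangular_family_real_independent:
  fixes W :: "nat \<Rightarrow> nat \<Rightarrow> int"
  assumes diag: "\<And>t. t \<in> {1..m} \<Longrightarrow> W t t = 1"
    and upper: "\<And>t u. t \<in> {1..m} \<Longrightarrow> t < u \<Longrightarrow> W t u = 0"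
  shows "inj_on (\<lambda>t u. real_of_int (W t u)) {1..m}"
    and "real_fun.independent ((\<lambda>t u. real_of_int (W t u)) ` {1..m})"
proof -
  show inj: "inj_on (\<lambda>t u. real_of_int (W t u)) {1..m}"
  proof (rule inj_onI)
    fix s t assume st: "s \<in> {1..m}" "t \<in> {1..m}"
      and eq: "(\<lambda>u. real_of_int (W s u)) = (\<lambda>u. real_of_int (W t u))"
    have "W s s = W t s" "W s t = W t t" using fun_cong[OF eq, of s] fun_cong[OF eq, of t] by simp_all
    then show "s = t" using diag upper st by (cases s t rule: linorder_cases) auto
  qed
  show "real_fun.independent ((\<lambda>t u. real_of_int (W t u)) ` {1..m})"
  proof (rule real_fun.independent_if_scalars_zero)
    fix f z assume sum0: "(\<Sum>x\<in>(\<lambda>t u. real_of_int (W t u)) ` {1..m}. (\<lambda>u. f x * x u)) = 0"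
      and z: "z \<in> (\<lambda>t u. real_of_int (W t u)) ` {1..m}"
    have "(\<Sum>t\<in>{1..m}. (\<lambda>u. f (\<lambda>u. real_of_int (W t u)) * real_of_int (W t u))) = 0"
      using sum0 by (subst (asm) sum.reindex[OF inj]) simp
    then have "(\<Sum>t\<in>{1..m}. (\<lambda>u. f (\<lambda>u. real_of_int (W t u)) * real_of_int (W t u))) u = 0"
      for u by simp
    then have pointwise: "(\<Sum>t\<in>{1..m}. f (\<lambda>u. real_of_int (W t u)) * real_of_int (W t u)) = 0"
      for u by (simp add: sum_fun_apply)
    have "\<forall>t\<in>{1..m}. f (\<lambda>u. real_of_int (W t u)) = 0"
      by (intro triangular_family_independent[of m W]) (use diag upper pointwise in auto)
    then show "f z = 0" using z by auto
  qed simp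
qed

lemma triangular_family_card_le:
  fixes W g :: "nat \<Rightarrow> nat \<Rightarrow> int"
  assumes diag: "\<And>t. t \<in> {1..m} \<Longrightarrow> W t t = 1"
    and upper: "\<And>t u. t \<in> {1..m} \<Longrightarrow> t < u \<Longrightarrow> W t u = 0"
    and "finite I"
    and span: "\<And>t. t \<in> {1..m} \<Longrightarrow> \<exists>c. W t = lincomb I c g"
  shows "m \<le> card I"
proof -
  define T where "T = (\<lambda>i u. real_of_int (g i u)) ` I"
  have "(\<lambda>t u. real_of_int (W t u)) ` {1..m} \<subseteq> real_fun.span T"
  proof
    fix z assume "z \<in> (\<lambda>t u. real_of_int (W t u)) ` {1..m}"
    then obtain t where t: "t \<in> {1..m}" "z = (\<lambda>u. real_of_int (W t u))" by blast
    then obtain c where c: "W t = lincomb I c g" using span by blast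
    have "z = (\<Sum>i\<in>I. (\<lambda>u. real_of_int (c i) * real_of_int (g i u)))"
      unfolding t(2) c by (auto simp: fun_eq_iff sum_fun_apply lincomb_def)
    also have "\<dots> \<in> real_fun.span T"
      by (intro real_fun.span_sum real_fun.span_scale real_fun.span_base) (auto simp: T_def)
    finally show "z \<in> real_fun.span T" .
  qed
  moreover have inj: "inj_on (\<lambda>t u. real_of_int (W t u)) {1..m}"
    and "real_fun.independent ((\<lambda>t u. real_of_int (W t u)) ` {1..m})"
    using triangular_family_real_independent[of m W] diag upper by auto
  ultimately have "card ((\<lambda>t u. real_of_int (W t u)) ` {1..m}) \<le> card T"
    using real_fun.independent_span_bound \<open>finite I\<close> by (simp add: T_def)
  also have "card T \<le> card I" unfolding T_def using \<open>finite I\<close> by (rule card_image_le)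
  finally show ?thesis using card_image[OF inj] by simp
qed

section \<open>The standard basis of a changemaker lattice\<close>

lemma irreducible_vecI:
  assumes "w \<in> L" "w \<noteq> (\<lambda>_. 0)"
    and "\<And>x y. x \<in> L \<Longrightarrow> y \<in> L \<Longrightarrow> x \<noteq> (\<lambda>_. 0) \<Longrightarrow> y \<noteq> (\<lambda>_. 0) \<Longrightarrow>
      (\<And>u. w u = x u + y u) \<Longrightarrow> 0 \<le> dot r x y \<Longrightarrow> False"
  shows "irreducible_vec r L w"
  unfolding irreducible_vec_def using assms by (metis not_le zle_diff1_eq diff_0)

locale changemaker_lattice =
  fixes r :: nat and \<sigma> :: "nat \<Rightarrow> int"
  assumes changemaker: "changemaker r \<sigma>" and two_le_r: "2 \<le> r"
begin

abbreviation \<Lambda> :: "(nat \<Rightarrow> int) set" where "\<Lambda> \<equiv> perp_lattice r \<sigma>"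

lemma sigma_0: "\<sigma> 0 = 1"
  using changemaker by (simp add: changemaker_def)

lemma sigma_step: "1 \<le> i \<Longrightarrow> i < r \<Longrightarrow> \<sigma> (i - 1) \<le> \<sigma> i \<and> \<sigma> i \<le> 1 + (\<Sum>j<i. \<sigma> j)"
  using changemaker by (simp add: changemaker_def)

lemma sigma_pos: "s < r \<Longrightarrow> 1 \<le> \<sigma> s"
  by (induction s) (use sigma_0 sigma_step in \<open>force+\<close>)

lemma sigma_mono: "s \<le> t \<Longrightarrow> t < r \<Longrightarrow> \<sigma> s \<le> \<sigma> t"
proof (induction t)
  case (Suc t)
  then show ?case using sigma_step[of "Suc t"] by (cases "s = Suc t") auto
qed simp

lemma subset_sum_exists:
  "t \<le> r \<Longrightarrow> 0 \<le> m \<Longrightarrow> m \<le> (\<Sum>s<t. \<sigma> s) \<Longrightarrow> \<exists>S\<subseteq>{..<t}. sum \<sigma> S = m"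
proof (induction t arbitrary: m)
  case (Suc t)
  show ?case
  proof (cases "m \<le> (\<Sum>s<t. \<sigma> s)")
    case True
    then show ?thesis using Suc by (meson lessThan_subset_iff order.trans le_SucI Suc_leD order_refl)
  next
    case False
    have "\<sigma> t \<le> m"
      using False Suc.prems sigma_0 sigma_step[of t] by (cases t) auto
    moreover have "m - \<sigma> t \<le> (\<Sum>s<t. \<sigma> s)" using Suc.prems by simp
    ultimately obtain S where S: "S \<subseteq> {..<t}" "sum \<sigma> S = m - \<sigma> t"
      using Suc.IH[of "m - \<sigma> t"] Suc.prems by auto
    moreover have "finite S" "t \<notin> S" using S(1) finite_subset by auto
    ultimately have "sum \<sigma> (insert t S) = m" by simp
    with S show ?thesis by (intro exI[of _ "insert t S"]) auto
  qed
qed simp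

lemma lattice_nonpos_eq_0:
  assumes "x \<in> \<Lambda>" "\<And>u. u < r \<Longrightarrow> x u \<le> 0"
  shows "x = (\<lambda>_. 0)"
proof
  fix u show "x u = 0"
  proof (cases "u < r")
    case True
    have "0 \<le> (\<Sum>i<r. x i * \<sigma> i)" using assms(1) by (simp add: perp_lattice_def dot_def)
    moreover have "x i * \<sigma> i \<le> 0" if "i < r" for i
      using assms(2)[OF that] sigma_pos[OF that] by (simp add: mult_nonpos_nonneg)
    ultimately have "x u * \<sigma> u = 0" using True by (intro sum_nonpos_eq_0[of "{..<r}"]) auto
    then show ?thesis using sigma_pos[OF True] by simp
  qed (use assms(1) in \<open>simp add: perp_lattice_def zvec_def\<close>)
qed

definition tight :: "nat \<Rightarrow> bool" where
  "tight t \<longleftrightarrow> \<sigma> t = 1 + (\<Sum>s<t. \<sigma> s)"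

lemma irreducible_unit_minus_indicator:
  assumes t: "t < r" "t \<notin> S" and w: "(\<lambda>u. of_bool (u = t) - of_bool (u \<in> S)) \<in> \<Lambda>"
  shows "irreducible_vec r \<Lambda> (\<lambda>u. of_bool (u = t) - of_bool (u \<in> S))"
    (is "irreducible_vec r \<Lambda> ?w")
proof (rule irreducible_vecI[OF w])
  show "?w \<noteq> (\<lambda>_. 0)" using t fun_cong[of ?w "\<lambda>_. 0" t] by auto
  fix x y assume x: "x \<in> \<Lambda>" "x \<noteq> (\<lambda>_. 0)" and y: "y \<in> \<Lambda>" "y \<noteq> (\<lambda>_. 0)"
    and split: "\<And>u. ?w u = x u + y u" and nonneg: "0 \<le> dot r x y"
  have prod_nonpos: "x u * y u \<le> 0" for u
    using int_mult_nonpos_if_abs_add_le_1[of "x u" "y u"] split[of u, symmetric] by auto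
  have "0 \<le> (\<Sum>u<r. x u * y u)" using nonneg by (simp add: dot_def)
  then have prod_0: "x u * y u = 0" if "u < r" for u
    using that prod_nonpos by (intro sum_nonpos_eq_0[of "{..<r}"]) auto
  have vanish: "z = (\<lambda>_. 0)"
    if "z \<in> \<Lambda>" "z t = 0" "\<And>u. ?w u = z u + z' u" "\<And>u. u < r \<Longrightarrow> z u * z' u = 0" for z z'
  proof (rule lattice_nonpos_eq_0[OF that(1)])
    fix u assume "u < r"
    then show "z u \<le> 0"
      using that(2) that(3)[of u] that(4)[of u] by (cases "u = t"; cases "u \<in> S") auto
  qed
  show False
  proof (cases "x t = 0")
    case True
    then show False using vanish[of x y] x split prod_0 by blast
  next
    case False
    then have "y t = 0" using prod_0[OF t(1)] by simp
    then show False using vanish[of y x] y split prod_0 by (simp add: add.commute mult.commute)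
  qed
qed

lemma tight_vector_in_lattice:
  assumes t: "t < r" and tight: "tight t"
  shows "(\<lambda>u. of_bool (u = t) - of_bool (u < t) - of_bool (u = 0)) \<in> \<Lambda>"
proof -
  have "{..<r} \<inter> {u. u = t} = {t}" "{..<r} \<inter> {u. u < t} = {..<t}" "{..<r} \<inter> {u. u = 0} = {0}"
    using t by auto
  then show ?thesis
    using t tight sigma_0
    by (simp add: tight_def perp_lattice_def zvec_def dot_def left_diff_distrib sum_subtractf)
qed

text \<open>In a splitting \<open>x + y\<close> of the tight vector the products \<open>x\<^sub>u y\<^sub>u\<close> are at most \<open>1\<close>
  at \<open>u = 0\<close>, non-positive elsewhere, and even for \<open>0 < u \<le> t\<close>. So if \<open>x \<cdot> y \<ge> 0\<close> they vanish
  for \<open>0 < u \<le> t\<close>, and \<open>x \<cdot> y = 1 - (x\<^sub>0 + 1)\<^sup>2 - \<Sum>\<^sub>u\<^sub>>\<^sub>t x\<^sub>u\<^sup>2\<close>.\<close>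

lemma tight_split_bounds:
  assumes t: "1 \<le> t" "t < r" and x_t: "x t \<le> 0"
    and split: "\<And>u. of_bool (u = t) - of_bool (u < t) - of_bool (u = 0) = x u + y u"
    and nonneg: "0 \<le> dot r x y"
  shows "x t = 0" and "\<And>u. 0 < u \<Longrightarrow> u < t \<Longrightarrow> x u = 0 \<or> x u = - 1"
    and "(x 0 + 1)\<^sup>2 + (\<Sum>u\<in>{t<..<r}. (x u)\<^sup>2) \<le> 1"
proof -
  define P where "P u = x u * y u" for u
  define A where "A = {1..<r}"
  have finA: "finite A" by (simp add: A_def)
  have "{..<r} = insert 0 A" using t by (auto simp: A_def)
  then have dot_split: "dot r x y = P 0 + sum P A" by (simp add: dot_def P_def A_def)
  have y_0: "y 0 = - 2 - x 0" using split[of 0] t by simp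
  have P_0: "P 0 = 1 - (x 0 + 1)\<^sup>2" unfolding P_def y_0 by (simp add: power2_eq_square algebra_simps)
  have P_nonpos: "P u \<le> 0" if "u \<in> A" for u
    using that split[of u, symmetric] int_mult_nonpos_if_abs_add_le_1[of "x u" "y u"]
    by (cases "u = t"; cases "u < t") (auto simp: P_def A_def)
  have "- 1 \<le> sum P A"
    using dot_split nonneg P_0 zero_le_power2[of "x 0 + 1"] by linarith
  then have P_ge: "- 1 \<le> P u" if "u \<in> A" for u
    using sum_nonpos_le_term[of A P u, OF finA P_nonpos that] by linarith
  have P_low: "P u = 0" if "1 \<le> u" "u \<le> t" for u
  proof -
    have "y u = of_bool (u = t) - of_bool (u < t) - x u" using split[of u] that by auto
    then have "even (P u)" using that by (cases "u = t") (auto simp: P_def)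
    then have "P u \<noteq> - 1" by auto
    moreover have "u \<in> A" using that t by (simp add: A_def)
    ultimately show ?thesis using P_ge P_nonpos by (smt (verit))
  qed
  show "x u = 0 \<or> x u = - 1" if "0 < u" "u < t" for u
  proof -
    have "y u = - 1 - x u" using split[of u] that by auto
    then show ?thesis using P_low[of u] that by (auto simp: P_def)
  qed
  have "y t = 1 - x t" using split[of t] t by auto
  then show "x t = 0" using P_low[of t] t x_t by (auto simp: P_def)
  have "P u = - (x u)\<^sup>2" if "u \<in> {t<..<r}" for u
  proof -
    have "y u = - x u" using split[of u] that by auto
    then show ?thesis by (simp add: P_def power2_eq_square)
  qed
  moreover have "A = {1..t} \<union> {t<..<r}" "{1..t} \<inter> {t<..<r} = {}" using t by (auto simp: A_def)
  ultimately have "sum P A = - (\<Sum>u\<in>{t<..<r}. (x u)\<^sup>2)"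
    using P_low by (simp add: sum.union_disjoint sum_negf)
  then show "(x 0 + 1)\<^sup>2 + (\<Sum>u\<in>{t<..<r}. (x u)\<^sup>2) \<le> 1"
    using dot_split nonneg P_0 by linarith
qed

text \<open>A vector of \<open>\<Lambda>\<close> with these coordinates would write \<open>\<sigma>\<^sub>u\<^sub>0 \<ge> \<sigma>\<^sub>t\<close> as a signed sum
  of at most \<open>\<sigma>\<^sub>t - 1\<close>.\<close>

lemma tight_no_short_relation:
  assumes t: "1 \<le> t" "t < r" and tight: "tight t"
    and x: "x \<in> \<Lambda>" "x 0 = - 1" "x t = 0" "\<And>u. 0 < u \<Longrightarrow> u < t \<Longrightarrow> x u = 0 \<or> x u = - 1"
    and u0: "t < u0" "u0 < r" "x u0 = 1 \<or> x u0 = - 1"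
    and high: "\<And>u. t < u \<Longrightarrow> u < r \<Longrightarrow> u \<noteq> u0 \<Longrightarrow> x u = 0"
  shows False
proof -
  define N where "N = (\<Sum>u<t. x u * \<sigma> u)"
  have x_low: "x u = 0 \<or> x u = - 1" if "u < t" for u
    using x(2,4) that by (cases "u = 0") auto
  have "(\<Sum>u\<in>{t..<r}. x u * \<sigma> u) = (\<Sum>u\<in>{t..<r}. if u = u0 then x u0 * \<sigma> u0 else 0)"
    using x(3) high by (intro sum.cong) (auto simp: order_le_less)
  also have "\<dots> = x u0 * \<sigma> u0" using u0 by simp
  finally have high_part: "(\<Sum>u\<in>{t..<r}. x u * \<sigma> u) = x u0 * \<sigma> u0" .
  have r_split: "{..<r} = {..<t} \<union> {t..<r}" using t by auto
  have "dot r x \<sigma> = N + (\<Sum>u\<in>{t..<r}. x u * \<sigma> u)"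
    unfolding dot_def N_def r_split by (rule sum.union_disjoint) auto
  then have N_eq: "N = - (x u0 * \<sigma> u0)" using x(1) high_part by (simp add: perp_lattice_def)
  have "N \<le> x 0 * \<sigma> 0"
    unfolding N_def
  proof (rule sum_nonpos_le_term)
    fix u assume "u \<in> {..<t}"
    then show "x u * \<sigma> u \<le> 0" using x_low[of u] sigma_pos[of u] t by auto
  qed (use t in auto)
  then have "N \<le> - 1" using x(2) sigma_0 by simp
  moreover have "- (\<Sum>u<t. \<sigma> u) \<le> N"
    unfolding N_def sum_negf[symmetric]
  proof (rule sum_mono)
    fix u assume "u \<in> {..<t}"
    then show "- \<sigma> u \<le> x u * \<sigma> u" using x_low[of u] sigma_pos[of u] t by auto
  qed
  moreover have "\<sigma> t \<le> \<sigma> u0" using sigma_mono u0 by simp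
  ultimately show False using N_eq u0(3) tight by (cases "x u0 = 1") (auto simp: tight_def)
qed

lemma tight_vector_no_nonneg_split:
  assumes t: "1 \<le> t" "t < r" and tight: "tight t"
    and x: "x \<in> \<Lambda>" "x \<noteq> (\<lambda>_. 0)" "x t \<le> 0"
    and split: "\<And>u. of_bool (u = t) - of_bool (u < t) - of_bool (u = 0) = x u + y u"
    and nonneg: "0 \<le> dot r x y"
  shows False
proof -
  note bounds = tight_split_bounds[OF t x(3) split nonneg]
  define H where "H = {t<..<r}"
  have "0 \<le> (\<Sum>u\<in>H. (x u)\<^sup>2)" by (simp add: sum_nonneg)
  show False
  proof (cases "\<exists>u0\<in>H. x u0 \<noteq> 0")
    case False
    have "(x 0 + 1)\<^sup>2 \<le> 1" using bounds(3) \<open>0 \<le> (\<Sum>u\<in>H. (x u)\<^sup>2)\<close> by (simp add: H_def)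
    then have "x 0 \<le> 0" by (simp add: abs_square_le_1)
    then have "x u \<le> 0" if "u < r" for u
      using that bounds(1) bounds(2)[of u] False
      by (cases "u = 0"; cases "u < t"; cases "u = t") (auto simp: H_def)
    then show False using lattice_nonpos_eq_0 x(1,2) by blast
  next
    case True
    then obtain u0 where u0: "u0 \<in> H" "x u0 \<noteq> 0" by blast
    have "(x u0)\<^sup>2 \<le> (\<Sum>u\<in>H. (x u)\<^sup>2)" using u0(1) by (intro member_le_sum) (auto simp: H_def)
    moreover have "0 < (x u0)\<^sup>2" using u0(2) by simp
    ultimately have "(x 0 + 1)\<^sup>2 = 0" "(x u0)\<^sup>2 = 1" "(\<Sum>u\<in>H. (x u)\<^sup>2) = (x u0)\<^sup>2"
      using bounds(3) zero_le_power2[of "x 0 + 1"] unfolding H_def by linarith+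
    moreover have "(\<Sum>u\<in>H. (x u)\<^sup>2) = (x u0)\<^sup>2 + (\<Sum>u\<in>H - {u0}. (x u)\<^sup>2)"
      using u0(1) by (simp add: H_def sum.remove)
    ultimately have "\<forall>u\<in>H - {u0}. (x u)\<^sup>2 = 0" by (simp add: H_def sum_nonneg_eq_0_iff)
    then show False
      using tight_no_short_relation[OF t tight x(1) _ bounds(1,2), of u0] u0 \<open>(x 0 + 1)\<^sup>2 = 0\<close>
        \<open>(x u0)\<^sup>2 = 1\<close> by (auto simp: H_def power2_eq_1_iff)
  qed
qed

lemma irreducible_tight_vector:
  assumes t: "1 \<le> t" "t < r" and tight: "tight t"
  shows "irreducible_vec r \<Lambda> (\<lambda>u. of_bool (u = t) - of_bool (u < t) - of_bool (u = 0))"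
    (is "irreducible_vec r \<Lambda> ?w")
proof (rule irreducible_vecI[OF tight_vector_in_lattice[OF t(2) tight]])
  show "?w \<noteq> (\<lambda>_. 0)" using t fun_cong[of ?w "\<lambda>_. 0" t] by auto
  fix x y assume x: "x \<in> \<Lambda>" "x \<noteq> (\<lambda>_. 0)" and y: "y \<in> \<Lambda>" "y \<noteq> (\<lambda>_. 0)"
    and split: "\<And>u. ?w u = x u + y u" and nonneg: "0 \<le> dot r x y"
  have "x t + y t = 1" using split[of t] t by simp
  then consider "x t \<le> 0" | "y t \<le> 0" by linarith
  then show False
  proof cases
    case 1
    show False by (rule tight_vector_no_nonneg_split[OF t tight x 1 split nonneg])
  next
    case 2
    have "\<And>u. ?w u = y u + x u" using split by (simp add: add.commute)
    moreover have "0 \<le> dot r y x" using nonneg by (simp add: dot_sym)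
    ultimately show False using tight_vector_no_nonneg_split[OF t tight y 2] by blast
  qed
qed

text \<open>The standard basis of \<open>\<Lambda>\<close>: \<open>e\<^sub>t\<close> minus a set of earlier \<open>e\<^sub>s\<close> whose \<open>\<sigma>\<close>-values
  add up to \<open>\<sigma>\<^sub>t\<close>; when no such set exists \<open>\<sigma>\<^sub>t\<close> is tight and \<open>e\<^sub>0\<close> is subtracted twice.\<close>

definition change_set :: "nat \<Rightarrow> nat set" where
  "change_set t = (SOME S. S \<subseteq> {..<t} \<and> sum \<sigma> S = \<sigma> t)"

definition std_vec :: "nat \<Rightarrow> nat \<Rightarrow> int" where
  "std_vec t = (if tight t then (\<lambda>u. of_bool (u = t) - of_bool (u < t) - of_bool (u = 0))
     else (\<lambda>u. of_bool (u = t) - of_bool (u \<in> change_set t)))"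

lemma change_set_spec:
  assumes "1 \<le> t" "t < r" "\<not> tight t"
  shows "change_set t \<subseteq> {..<t}" "sum \<sigma> (change_set t) = \<sigma> t"
proof -
  have "\<sigma> t \<le> (\<Sum>s<t. \<sigma> s)" using assms sigma_step[of t] by (simp add: tight_def)
  then have "\<exists>S. S \<subseteq> {..<t} \<and> sum \<sigma> S = \<sigma> t"
    using subset_sum_exists[of t "\<sigma> t"] sigma_pos[of t] assms by auto
  then show "change_set t \<subseteq> {..<t}" "sum \<sigma> (change_set t) = \<sigma> t"
    unfolding change_set_def by (metis (mono_tags, lifting) someI_ex)+
qed

lemma std_vec_diag: "1 \<le> t \<Longrightarrow> t < r \<Longrightarrow> std_vec t t = 1"
  using change_set_spec[of t] by (auto simp: std_vec_def)

lemma std_vec_upper: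
  assumes "1 \<le> t" "t < r" "t < u" shows "std_vec t u = 0"
proof -
  have "u \<notin> change_set t" if "\<not> tight t" using change_set_spec[OF assms(1,2) that] assms(3) by auto
  then show ?thesis using assms(3) by (auto simp: std_vec_def)
qed

lemma std_vec_in_lattice:
  assumes t: "1 \<le> t" "t < r" shows "std_vec t \<in> \<Lambda>"
proof (cases "tight t")
  case True
  then show ?thesis using tight_vector_in_lattice[OF t(2)] by (simp add: std_vec_def)
next
  case False
  note S = change_set_spec[OF t False]
  have "std_vec t \<in> zvec r" using std_vec_upper[OF t] t by (auto simp: zvec_def)
  moreover have "{..<r} \<inter> {u. u = t} = {t}" "{..<r} \<inter> {u. u \<in> change_set t} = change_set t"
    using t S(1) by auto
  then have "dot r (std_vec t) \<sigma> = 0"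
    using False S(2) by (simp add: std_vec_def dot_def left_diff_distrib sum_subtractf)
  ultimately show ?thesis by (simp add: perp_lattice_def)
qed

lemma std_vec_irreducible:
  assumes t: "1 \<le> t" "t < r" shows "irreducible_vec r \<Lambda> (std_vec t)"
proof (cases "tight t")
  case True
  then show ?thesis using irreducible_tight_vector[OF t] by (simp add: std_vec_def)
next
  case False
  then have "t \<notin> change_set t" using change_set_spec[OF t] by auto
  then show ?thesis
    using irreducible_unit_minus_indicator[OF t(2)] std_vec_in_lattice[OF t] False
    by (simp add: std_vec_def)
qed

text \<open>At an exceptional index, \<open>\<sigma> = (1, \<dots>, 1, t, \<dots>)\<close>, the standard vector
  \<open>e\<^sub>t - e\<^sub>0 - \<dots> - e\<^sub>t\<^sub>-\<^sub>1\<close> is orthogonal to all earlier ones.\<close>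

definition exceptional :: "nat \<Rightarrow> bool" where
  "exceptional t \<longleftrightarrow> 2 \<le> t \<and> t < r \<and> (\<forall>s<t. \<sigma> s = 1) \<and> \<sigma> t = int t"

lemma exceptional_unique: "exceptional s \<Longrightarrow> exceptional t \<Longrightarrow> s = t"
  by (cases s t rule: linorder_cases) (auto simp: exceptional_def)

lemma std_vec_proportional_imp_exceptional:
  assumes t: "2 \<le> t" "t < r" and proportional: "\<And>s. 1 \<le> s \<Longrightarrow> s < t \<Longrightarrow> std_vec t s = \<sigma> s * std_vec t 0"
  shows "exceptional t"
proof (cases "tight t")
  case True
  then have "- 1 = \<sigma> 1 * (- 2)" using proportional[of 1] t by (simp add: std_vec_def)
  then have False by presburger
  then show ?thesis ..
next
  case False
  define S where "S = change_set t"
  have S: "S \<subseteq> {..<t}" "sum \<sigma> S = \<sigma> t" using change_set_spec[of t] t False by (auto simp: S_def)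
  have W: "std_vec t u = of_bool (u = t) - of_bool (u \<in> S)" for u
    using False by (simp add: std_vec_def S_def)
  show ?thesis
  proof (cases "0 \<in> S")
    case False
    have "S = {}"
    proof (rule ccontr)
      assume "S \<noteq> {}"
      then obtain s where "s \<in> S" by blast
      then show False using proportional[of s] S(1) False W[of s] W[of 0] by (cases s) auto
    qed
    then show ?thesis using S(2) sigma_pos[of t] t by simp
  next
    case True
    have low: "\<sigma> s = 1 \<and> s \<in> S" if "s < t" for s
    proof (cases "s = 0")
      case False
      then have "std_vec t s = - \<sigma> s" using proportional[of s] that W[of 0] True by simp
      then show ?thesis using W[of s] sigma_pos[of s] that t by (cases "s \<in> S") auto
    qed (use True sigma_0 in simp)
    then have "S = {..<t}" using S(1) by auto
    then have "\<sigma> t = int t" using S(2) low by simp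
    then show ?thesis using t low by (simp add: exceptional_def)
  qed
qed

lemma std_span_below:
  "m < r \<Longrightarrow> x \<in> \<Lambda> \<Longrightarrow> (\<And>u. m < u \<Longrightarrow> x u = 0) \<Longrightarrow> \<exists>c. x = lincomb {1..m} c std_vec"
proof (induction m arbitrary: x)
  case 0
  have "(\<Sum>u<r. x u * \<sigma> u) = (\<Sum>u<r. if u = 0 then x 0 else 0)"
    using "0.prems"(3) sigma_0 by (intro sum.cong) auto
  then have "x 0 = 0" using "0.prems"(1,2) by (simp add: perp_lattice_def dot_def)
  then have "x = (\<lambda>_. 0)" using "0.prems"(3) by (metis neq0_conv)
  then show ?case by (simp add: lincomb_def)
next
  case (Suc m)
  let ?a = "x (Suc m)"
  define x' where "x' u = x u - ?a * std_vec (Suc m) u" for u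
  have W: "std_vec (Suc m) \<in> \<Lambda>" using std_vec_in_lattice Suc.prems(1) by simp
  have "dot r x' \<sigma> = dot r x \<sigma> - ?a * dot r (std_vec (Suc m)) \<sigma>"
    unfolding x'_def dot_diff_left dot_scale_left ..
  then have "x' \<in> \<Lambda>"
    using Suc.prems(2) W by (auto simp: x'_def zvec_def perp_lattice_def)
  moreover have "x' u = 0" if "m < u" for u
    using that Suc.prems std_vec_diag[of "Suc m"] std_vec_upper[of "Suc m" u]
    by (cases "u = Suc m") (auto simp: x'_def)
  ultimately obtain c where c: "x' = lincomb {1..m} c std_vec"
    using Suc.IH Suc.prems(1) by force
  have split: "{1..Suc m} = insert (Suc m) {1..m}" by auto
  have "lincomb {1..Suc m} (c(Suc m := ?a)) std_vec =
      (\<lambda>u. ?a * std_vec (Suc m) u + lincomb {1..m} (c(Suc m := ?a)) std_vec u)"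
    unfolding split by (simp add: lincomb_insert)
  also have "lincomb {1..m} (c(Suc m := ?a)) std_vec = x'" unfolding c by (rule lincomb_cong) simp
  also have "(\<lambda>u. ?a * std_vec (Suc m) u + x' u) = x" by (simp add: x'_def)
  finally show ?case by metis
qed

lemma std_span:
  assumes "x \<in> \<Lambda>" shows "\<exists>c. x = lincomb {1..<r} c std_vec"
proof -
  have "{1..r - 1} = {1..<r}" using two_le_r by auto
  moreover have "x u = 0" if "r - 1 < u" for u using assms that by (simp add: perp_lattice_def zvec_def)
  ultimately show ?thesis using std_span_below[of "r - 1" x] assms two_le_r by auto
qed

lemma lattice_rank:
  assumes "finite I" "\<And>x. x \<in> \<Lambda> \<Longrightarrow> \<exists>c. x = lincomb I c g"
  shows "r - 1 \<le> card I"
  using triangular_family_card_le[of "r - 1" std_vec I g] assms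
    std_vec_diag std_vec_upper std_vec_in_lattice by force

lemma std_vec_orthogonal_predecessors_imp_exceptional:
  assumes t: "2 \<le> t" "t < r"
    and orth: "\<And>s. 1 \<le> s \<Longrightarrow> s < t \<Longrightarrow> dot r (std_vec s) (std_vec t) = 0"
  shows "exceptional t"
proof (rule std_vec_proportional_imp_exceptional[OF t])
  fix s assume s: "1 \<le> s" "s < t"
  define f where "f u = of_bool (u = s) - of_bool (u = 0) * \<sigma> s" for u
  have "{..<r} \<inter> {u. u = s} = {s}" "{..<r} \<inter> {u. u = 0} = {0}" using s t by auto
  then have f_dot: "dot r f y = y s - \<sigma> s * y 0" for y
    by (simp add: f_def dot_def left_diff_distrib sum_subtractf mult.assoc)
  have "f \<in> \<Lambda>"
    using f_dot[of \<sigma>] s t sigma_0 by (auto simp: perp_lattice_def zvec_def f_def)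
  moreover have "f u = 0" if "t - 1 < u" for u using that s by (simp add: f_def)
  moreover have "t - 1 < r" using t by simp
  ultimately obtain c where "f = lincomb {1..t - 1} c std_vec"
    using std_span_below[of "t - 1" f] by blast
  then have "dot r f (std_vec t) = (\<Sum>q\<in>{1..t - 1}. c q * dot r (std_vec q) (std_vec t))"
    by (simp add: dot_lincomb_left)
  also have "\<dots> = 0" using orth by (intro sum.neutral) auto
  finally show "std_vec t s = \<sigma> s * std_vec t 0" using f_dot by simp
qed

text \<open>Index 1 stands in for the exceptional index when there is none.\<close>

definition exc_index :: nat where
  "exc_index = (if \<exists>t. exceptional t then THE t. exceptional t else 1)"

lemma exceptional_exc_index: "exceptional t \<Longrightarrow> exc_index = t"
  unfolding exc_index_def using exceptional_unique by auto

lemma std_vec_adjacent_predecessor: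
  assumes "1 < t" "t < r" "t \<noteq> exc_index"
  shows "\<exists>s. 1 \<le> s \<and> s < t \<and> dot r (std_vec s) (std_vec t) \<noteq> 0"
proof (rule ccontr)
  assume "\<not> ?thesis"
  then have "exceptional t"
    using assms std_vec_orthogonal_predecessors_imp_exceptional[of t] by auto
  then show False using exceptional_exc_index assms(3) by simp
qed

lemma std_graph_two_classes:
  assumes respects: "\<And>s t. s \<in> {1..<r} \<Longrightarrow> t \<in> {1..<r} \<Longrightarrow>
      dot r (std_vec s) (std_vec t) \<noteq> 0 \<Longrightarrow> Q s = Q t"
    and exc: "Q exc_index = Q 1"
  shows "t \<in> {1..<r} \<Longrightarrow> Q t = Q 1"
proof (induction t rule: less_induct)
  case (less t)
  show ?case
  proof (cases "t = 1 \<or> t = exc_index")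
    case False
    then obtain s where s: "1 \<le> s" "s < t" "dot r (std_vec s) (std_vec t) \<noteq> 0"
      using std_vec_adjacent_predecessor[of t] less.prems by auto
    then show ?thesis using less.IH[of s] respects[of s t] less.prems by auto
  qed (use exc in auto)
qed

end

section \<open>Obtuse superbases\<close>

lemma laplacian_form_identity:
  fixes P :: "nat \<Rightarrow> nat \<Rightarrow> int"
  assumes sym: "\<And>s t. P s t = P t s" and row: "\<And>s. s \<in> V \<Longrightarrow> (\<Sum>t\<in>V. P s t) = 0"
  shows "2 * (\<Sum>s\<in>V. \<Sum>t\<in>V. a s * b t * P s t) =
    (\<Sum>s\<in>V. \<Sum>t\<in>V. - P s t * ((a s - a t) * (b s - b t)))"
proof -
  have diag_s: "(\<Sum>s\<in>V. \<Sum>t\<in>V. a s * b s * P s t) = 0"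
    by (simp add: sum_distrib_left[symmetric] row)
  have "(\<Sum>s\<in>V. \<Sum>t\<in>V. a t * b t * P s t) = (\<Sum>t\<in>V. \<Sum>s\<in>V. a t * b t * P t s)"
    by (subst sum.swap) (simp add: sym)
  also have "\<dots> = 0" by (simp add: sum_distrib_left[symmetric] row)
  finally have diag_t: "(\<Sum>s\<in>V. \<Sum>t\<in>V. a t * b t * P s t) = 0" .
  have cross: "(\<Sum>s\<in>V. \<Sum>t\<in>V. a t * b s * P s t) = (\<Sum>s\<in>V. \<Sum>t\<in>V. a s * b t * P s t)"
    by (subst sum.swap) (simp add: sym)
  have "- P s t * ((a s - a t) * (b s - b t)) =
      (a s * b t * P s t + a t * b s * P s t) - (a s * b s * P s t + a t * b t * P s t)" for s t
    by (simp add: algebra_simps)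
  then have "(\<Sum>s\<in>V. \<Sum>t\<in>V. - P s t * ((a s - a t) * (b s - b t))) =
      ((\<Sum>s\<in>V. \<Sum>t\<in>V. a s * b t * P s t) + (\<Sum>s\<in>V. \<Sum>t\<in>V. a t * b s * P s t))
      - ((\<Sum>s\<in>V. \<Sum>t\<in>V. a s * b s * P s t) + (\<Sum>s\<in>V. \<Sum>t\<in>V. a t * b t * P s t))"
    by (simp only: sum_subtractf sum.distrib)
  then show ?thesis using diag_s diag_t cross by simp
qed

locale obtuse_superbase_lattice =
  fixes r :: nat and L :: "(nat \<Rightarrow> int) set" and k :: nat and v :: "nat \<Rightarrow> nat \<Rightarrow> int"
  assumes superbase: "obtuse_superbase r L k v"
    and lattice_in_zvec: "L \<subseteq> zvec r"
    and lattice_lincomb: "\<And>I c g. finite I \<Longrightarrow> (\<And>i. i \<in> I \<Longrightarrow> g i \<in> L) \<Longrightarrow> lincomb I c g \<in> L"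
    and rank: "\<And>I g. finite I \<Longrightarrow> (\<And>x. x \<in> L \<Longrightarrow> \<exists>c. x = lincomb I c g) \<Longrightarrow> k \<le> card I"
    and rank_pos: "0 < k"
begin

abbreviation gram :: "nat \<Rightarrow> nat \<Rightarrow> int" where
  "gram s t \<equiv> dot r (v s) (v t)"

lemma v_in_lattice: "i \<le> k \<Longrightarrow> v i \<in> L"
  using superbase by (auto simp: obtuse_superbase_def spans_def)

lemma lattice_spanned: "x \<in> L \<Longrightarrow> \<exists>c. x = lincomb {..k} c v"
  using superbase by (auto simp: obtuse_superbase_def spans_def)

lemma gram_nonpos: "s \<le> k \<Longrightarrow> t \<le> k \<Longrightarrow> s \<noteq> t \<Longrightarrow> gram s t \<le> 0"
  using superbase by (auto simp: obtuse_superbase_def)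

lemma superbase_sum: "lincomb {..k} (\<lambda>_. 1) v = (\<lambda>_. 0)"
  using superbase by (simp add: obtuse_superbase_def)

lemma gram_row_sum: "(\<Sum>t\<le>k. gram s t) = 0"
  using dot_lincomb_right[of r "v s" "{..k}" "\<lambda>_. 1" v] superbase_sum by (simp add: dot_def)

lemma dot_lincomb_lincomb:
  "dot r (lincomb X a v) (lincomb Y b v) = (\<Sum>s\<in>X. \<Sum>t\<in>Y. a s * b t * gram s t)"
  by (subst dot_lincomb_left) (simp only: dot_lincomb_right sum_distrib_left mult.assoc)

lemma gram_terms_vanish:
  assumes nonneg: "0 \<le> dot r (lincomb {..k} a v) (lincomb {..k} b v)"
    and opposite: "\<And>s t. s \<le> k \<Longrightarrow> t \<le> k \<Longrightarrow> (a s - a t) * (b s - b t) \<le> 0"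
    and st: "s \<le> k" "t \<le> k" "gram s t \<noteq> 0"
  shows "(a s - a t) * (b s - b t) = 0"
proof -
  define T where "T s t = - gram s t * ((a s - a t) * (b s - b t))" for s t
  have T_nonpos: "T s t \<le> 0" if "s \<le> k" "t \<le> k" for s t
    using that opposite[OF that] gram_nonpos[OF that]
    by (cases "s = t") (auto simp: T_def intro: mult_nonpos_nonpos)
  have "0 \<le> (\<Sum>s\<le>k. \<Sum>t\<le>k. T s t)"
    using nonneg laplacian_form_identity[of gram "{..k}" a b] gram_row_sum
    by (simp add: T_def dot_lincomb_lincomb dot_sym)
  then have "(\<Sum>t\<le>k. T s t) = 0"
    using st T_nonpos by (intro sum_nonpos_eq_0[of "{..k}" "\<lambda>s. \<Sum>t\<le>k. T s t"]) (auto intro: sum_nonpos)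
  then have "T s t = 0" using st T_nonpos by (intro sum_nonpos_eq_0[of "{..k}"]) auto
  then show ?thesis using st(3) by (simp add: T_def)
qed

lemma orthogonal_part_sum_zero:
  assumes C: "C \<subseteq> {..k}" and orth: "\<And>c d. c \<in> C \<Longrightarrow> d \<in> {..k} - C \<Longrightarrow> gram c d = 0"
  shows "lincomb C (\<lambda>_. 1) v = (\<lambda>_. 0)"
proof -
  define D where "D = {..k} - C"
  have finite: "finite C" "finite D" using C finite_subset by (auto simp: D_def)
  have "{..k} = C \<union> D" using C by (auto simp: D_def)
  then have "(\<lambda>t. lincomb C (\<lambda>_. 1) v t + lincomb D (\<lambda>_. 1) v t) = (\<lambda>_. 0)"
    using superbase_sum lincomb_union[OF finite, of "\<lambda>_. 1" v] by (auto simp: D_def)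
  then have sum_D: "lincomb D (\<lambda>_. 1) v = (\<lambda>t. - lincomb C (\<lambda>_. 1) v t)"
    by (auto simp: fun_eq_iff add_eq_0_iff)
  have "dot r (lincomb C (\<lambda>_. 1) v) (lincomb D (\<lambda>_. 1) v) = 0"
    unfolding dot_lincomb_lincomb using orth by (auto simp: D_def intro!: sum.neutral)
  then have "dot r (lincomb C (\<lambda>_. 1) v) (lincomb C (\<lambda>_. 1) v) = 0"
    unfolding sum_D by (simp add: dot_def sum_negf)
  moreover have "lincomb C (\<lambda>_. 1) v \<in> zvec r"
    using C v_in_lattice lattice_in_zvec by (intro lincomb_in_zvec) auto
  ultimately show ?thesis by (rule dot_self_eq_0[rotated])
qed

text \<open>The rank hypothesis enters here: a superbase splitting into two orthogonal parts would
  yield a generating set of \<open>k - 1\<close> vectors.\<close>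

lemma orthogonal_split_trivial:
  assumes C: "C \<subseteq> {..k}" and orth: "\<And>c d. c \<in> C \<Longrightarrow> d \<in> {..k} - C \<Longrightarrow> gram c d = 0"
  shows "C = {} \<or> C = {..k}"
proof (rule ccontr)
  assume "\<not> ?thesis"
  then obtain c0 d0 where c0: "c0 \<in> C" and d0: "d0 \<in> {..k} - C" using C by blast
  define D where "D = {..k} - C"
  have zero_C: "lincomb C (\<lambda>_. 1) v = (\<lambda>_. 0)" by (rule orthogonal_part_sum_zero[OF C orth])
  have "gram d c = 0" if "d \<in> D" "c \<in> {..k} - D" for c d
    using orth[of c d] that C by (auto simp: D_def dot_sym)
  then have zero_D: "lincomb D (\<lambda>_. 1) v = (\<lambda>_. 0)"
    by (intro orthogonal_part_sum_zero) (auto simp: D_def)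
  have "\<exists>c. x = lincomb ({..k} - {c0, d0}) c v" if "x \<in> L" for x
  proof -
    obtain c where c: "x = lincomb {..k} c v" using lattice_spanned[OF \<open>x \<in> L\<close>] by blast
    define c1 where "c1 s = c s - c c0 * of_bool (s \<in> C)" for s
    define c2 where "c2 s = c1 s - c1 d0 * of_bool (s \<in> D)" for s
    have "lincomb ({..k} - {c0, d0}) c2 v = lincomb {..k} c2 v"
      using c0 d0 by (intro lincomb_subset[symmetric]) (auto simp: c1_def c2_def D_def)
    also have "\<dots> = lincomb {..k} c1 v"
      unfolding c2_def using zero_D by (intro lincomb_shift_by_zero_sum) (auto simp: D_def)
    also have "\<dots> = lincomb {..k} c v"
      unfolding c1_def using zero_C C by (intro lincomb_shift_by_zero_sum) auto
    finally show ?thesis using c by metis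
  qed
  then have "k \<le> card ({..k} - {c0, d0})" by (intro rank) auto
  moreover have "c0 \<noteq> d0" using c0 d0 by auto
  then have "card ({..k} - {c0, d0}) = k - 1" using c0 d0 C by (subst card_Diff_subset) auto
  ultimately show False using rank_pos by simp
qed

lemma constant_if_respects_gram:
  assumes respects: "\<And>s t. s \<le> k \<Longrightarrow> t \<le> k \<Longrightarrow> gram s t \<noteq> 0 \<Longrightarrow> f s = f t"
    and "s \<le> k" "t \<le> k"
  shows "f s = f t"
proof -
  have "{u. u \<le> k \<and> f u = f s} = {} \<or> {u. u \<le> k \<and> f u = f s} = {..k}"
  proof (rule orthogonal_split_trivial)
    fix c d assume "c \<in> {u. u \<le> k \<and> f u = f s}" "d \<in> {..k} - {u. u \<le> k \<and> f u = f s}"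
    then show "gram c d = 0" using respects[of c d] by (cases "gram c d = 0") auto
  qed auto
  moreover have "s \<in> {u. u \<le> k \<and> f u = f s}" using assms(2) by simp
  ultimately have "t \<in> {u. u \<le> k \<and> f u = f s}" using assms(3) by (elim disjE) auto
  then show ?thesis by simp
qed

lemma singleton_neq_indices: "{i} \<noteq> {..k}"
proof
  assume "{i} = {..k}"
  then have "card {i} = card {..k}" by simp
  with rank_pos show False by simp
qed

lemma other_index: "\<exists>j\<le>k. j \<noteq> i"
proof (cases "i = 0")
  case True
  then show ?thesis using rank_pos by (intro exI[of _ 1]) auto
qed auto

lemma v_nonzero: "i \<le> k \<Longrightarrow> v i \<noteq> (\<lambda>_. 0)"
proof
  assume "i \<le> k" "v i = (\<lambda>_. 0)"
  then have "{i} = {} \<or> {i} = {..k}"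
    by (intro orthogonal_split_trivial) (auto simp: dot_zero_left)
  with singleton_neq_indices[of i] show False by simp
qed

lemma spans_without: "j \<le> k \<Longrightarrow> spans L ({..k} - {j}) v"
  unfolding spans_def
proof (intro conjI ballI)
  fix x assume "j \<le> k" "x \<in> L"
  then obtain c where "x = lincomb {..k} c v" using lattice_spanned by blast
  also have "\<dots> = lincomb {..k} (\<lambda>s. c s - c j * of_bool (s \<in> {..k})) v"
    using superbase_sum by (intro lincomb_shift_by_zero_sum[symmetric]) auto
  also have "\<dots> = lincomb ({..k} - {j}) (\<lambda>s. c s - c j * of_bool (s \<in> {..k})) v"
    using \<open>j \<le> k\<close> by (intro lincomb_subset) auto
  finally show "\<exists>c. x = lincomb ({..k} - {j}) c v" by blast
qed (use v_in_lattice in auto)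

lemma lin_indep_without: "j \<le> k \<Longrightarrow> lin_indep ({..k} - {j}) v"
  unfolding lin_indep_def
proof (intro allI impI ballI)
  fix c i assume j: "j \<le> k" and zero: "lincomb ({..k} - {j}) c v = (\<lambda>_. 0)"
    and i: "i \<in> {..k} - {j}"
  define c' where "c' = c(j := 0)"
  have "lincomb {..k} c' v = lincomb ({..k} - {j}) c' v"
    by (rule lincomb_subset) (auto simp: c'_def)
  also have "\<dots> = lincomb ({..k} - {j}) c v" by (rule lincomb_cong) (simp add: c'_def)
  finally have zero': "lincomb {..k} c' v = (\<lambda>_. 0)" using zero by simp
  have nonneg: "0 \<le> dot r (lincomb {..k} c' v) (lincomb {..k} (\<lambda>s. - c' s) v)"
    unfolding zero' by (simp add: dot_zero_left)
  have opposite: "(c' s - c' t) * (- c' s - - c' t) \<le> 0" for s t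
    by (cases "c' t \<le> c' s") (simp_all add: mult_nonneg_nonpos mult_nonpos_nonneg)
  have respects: "c' s = c' t" if "s \<le> k" "t \<le> k" "gram s t \<noteq> 0" for s t
  proof -
    have "c' s - c' t = 0 \<or> - c' s - - c' t = 0"
      using gram_terms_vanish[OF nonneg opposite that] by (simp only: mult_eq_0_iff)
    then show ?thesis by (elim disjE) linarith+
  qed
  have "c' i = c' j" using i j by (intro constant_if_respects_gram[OF respects]) auto
  then show "c i = 0" using i by (simp add: c'_def)
qed

text \<open>\<open>cut i A B\<close>: deleting \<open>v\<^sub>i\<close> disconnects the graph on the superbase whose edges join
  non-orthogonal vectors, \<open>A\<close> and \<open>B\<close> being unions of the resulting components.\<close>

definition cut :: "nat \<Rightarrow> nat set \<Rightarrow> nat set \<Rightarrow> bool" where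
  "cut i A B \<longleftrightarrow> i \<le> k \<and> A \<union> B = {..k} - {i} \<and> A \<inter> B = {} \<and> A \<noteq> {} \<and> B \<noteq> {} \<and>
     (\<forall>a\<in>A. \<forall>b\<in>B. gram a b = 0)"

definition cut_vertex :: "nat \<Rightarrow> bool" where
  "cut_vertex i \<longleftrightarrow> (\<exists>A B. cut i A B)"

lemma cut_sym:
  assumes "cut i A B" shows "cut i B A"
proof -
  have parts: "i \<le> k" "A \<union> B = {..k} - {i}" "A \<inter> B = {}" "A \<noteq> {}" "B \<noteq> {}"
    and orth: "\<And>a b. a \<in> A \<Longrightarrow> b \<in> B \<Longrightarrow> gram a b = 0"
    using assms by (auto simp: cut_def)
  have "\<forall>b\<in>B. \<forall>a\<in>A. gram b a = 0" using orth dot_sym by metis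
  moreover have "B \<union> A = {..k} - {i}" "B \<inter> A = {}" using parts(2,3) by (simp_all add: Un_commute Int_commute)
  ultimately show ?thesis using parts(1,4,5) unfolding cut_def by blast
qed

lemma cut_vertexI:
  assumes i: "i \<le> k"
    and respects: "\<And>s t. s \<in> {..k} - {i} \<Longrightarrow> t \<in> {..k} - {i} \<Longrightarrow> gram s t \<noteq> 0 \<Longrightarrow> f s = f t"
    and s: "s0 \<in> {..k} - {i}" "s1 \<in> {..k} - {i}" "f s0 \<noteq> f s1"
  shows "cut_vertex i"
proof -
  define A where "A = {s \<in> {..k} - {i}. f s = f s0}"
  define B where "B = {s \<in> {..k} - {i}. f s \<noteq> f s0}"
  have "gram a b = 0" if "a \<in> A" "b \<in> B" for a b
    using that respects[of a b] by (cases "gram a b = 0") (auto simp: A_def B_def)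
  moreover have "A \<union> B = {..k} - {i}" "A \<inter> B = {}" "A \<noteq> {}" "B \<noteq> {}"
    using s by (auto simp: A_def B_def)
  ultimately have "cut i A B" using i by (simp add: cut_def)
  then show ?thesis unfolding cut_vertex_def by blast
qed

lemma lincomb_const_off_vertex:
  assumes "i \<le> k" "\<And>s. s \<in> {..k} - {i} \<Longrightarrow> a s = \<alpha>"
  shows "lincomb {..k} a v = (\<lambda>t. (a i - \<alpha>) * v i t)"
proof -
  have "lincomb {..k} a v = lincomb {..k} (\<lambda>s. a s - \<alpha> * of_bool (s \<in> {..k})) v"
    using superbase_sum by (intro lincomb_shift_by_zero_sum[symmetric]) auto
  also have "\<dots> = lincomb {i} (\<lambda>s. a s - \<alpha> * of_bool (s \<in> {..k})) v"
    using assms by (intro lincomb_subset) auto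
  finally show ?thesis using assms(1) by (simp add: lincomb_def)
qed

text \<open>With \<open>x = \<Sum> a\<^sub>s v\<^sub>s\<close> we get \<open>y = \<Sum> b\<^sub>s v\<^sub>s\<close> for \<open>b = e\<^sub>i - a\<close>. As \<open>(a\<^sub>s - a\<^sub>t) + (b\<^sub>s - b\<^sub>t)\<close>
  lies in \<open>{-1, 0, 1}\<close>, every term of the Laplacian form of \<open>x \<cdot> y \<ge> 0\<close> is non-positive, so
  each one vanishes.\<close>

lemma nonneg_split_coefficients:
  assumes i: "i \<le> k" and a: "x = lincomb {..k} a v"
    and split: "v i = (\<lambda>t. x t + y t)" and nonneg: "0 \<le> dot r x y"
    and st: "s \<le> k" "t \<le> k" "gram s t \<noteq> 0"
  shows "(a s - a t) * (of_bool (s = i) - of_bool (t = i) - (a s - a t)) = 0"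
proof -
  define b where "b s = of_bool (s = i) - a s" for s
  have "lincomb {..k} b v =
      (\<lambda>t. lincomb {..k} (\<lambda>s. of_bool (s = i)) v t - lincomb {..k} a v t)"
    unfolding b_def by (rule lincomb_diff[symmetric])
  also have "\<dots> = (\<lambda>t. v i t - x t)" using lincomb_indicator[of "{..k}" i v] i a by simp
  finally have "y = lincomb {..k} b v" using split by (simp add: fun_eq_iff)
  then have nonneg': "0 \<le> dot r (lincomb {..k} a v) (lincomb {..k} b v)" using nonneg a by simp
  have "(a s - a t) * (b s - b t) = 0"
    using st by (intro gram_terms_vanish[OF nonneg'] int_mult_nonpos_if_abs_add_le_1) (auto simp: b_def)
  then show ?thesis by (simp add: b_def algebra_simps)
qed

lemma cut_vertex_if_nonneg_split:
  assumes i: "i \<le> k" and x: "x \<in> L" "x \<noteq> (\<lambda>_. 0)" and y: "y \<noteq> (\<lambda>_. 0)"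
    and split: "v i = (\<lambda>t. x t + y t)" and nonneg: "0 \<le> dot r x y"
  shows "cut_vertex i"
proof -
  obtain a where a: "x = lincomb {..k} a v" using lattice_spanned x(1) by blast
  note edge = nonneg_split_coefficients[OF i a split nonneg]
  show ?thesis
  proof (cases "\<exists>s0\<in>{..k} - {i}. \<exists>s1\<in>{..k} - {i}. a s0 \<noteq> a s1")
    case True
    have "a s = a t" if "s \<in> {..k} - {i}" "t \<in> {..k} - {i}" "gram s t \<noteq> 0" for s t
    proof -
      have "a s - a t = 0 \<or> - (a s - a t) = 0" using edge[of s t] that by simp
      then show ?thesis by (elim disjE) simp_all
    qed
    moreover obtain s0 s1 where "s0 \<in> {..k} - {i}" "s1 \<in> {..k} - {i}" "a s0 \<noteq> a s1"
      using True by blast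
    ultimately show ?thesis by (rule cut_vertexI[OF i])
  next
    case False
    obtain s' where s': "s' \<le> k" "s' \<noteq> i" using other_index by blast
    define d where "d = a i - a s'"
    have const: "a s = a s'" if "s \<in> {..k} - {i}" for s using False that s' by blast
    have x_eq: "x t = d * v i t" for t using lincomb_const_off_vertex[OF i const] a by (simp add: d_def)
    have "d \<noteq> 0" using x(2) x_eq by auto
    moreover have "d \<noteq> 1" using y x_eq fun_cong[OF split] by (auto simp: fun_eq_iff)
    ultimately have "gram i t = 0" if "t \<in> {..k} - {i}" for t
      using edge[of i t] const[OF that] that i by (auto simp: d_def)
    then have "{i} = {} \<or> {i} = {..k}"
      using i by (intro orthogonal_split_trivial) auto
    with singleton_neq_indices[of i] show ?thesis by simp
  qed
qed

lemma irreducible_if_not_cut_vertex: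
  assumes "i \<le> k" "\<not> cut_vertex i" shows "irreducible_vec r L (v i)"
proof (rule irreducible_vecI)
  show "v i \<in> L" "v i \<noteq> (\<lambda>_. 0)" using assms v_in_lattice v_nonzero by auto
next
  fix x y assume "x \<in> L" "x \<noteq> (\<lambda>_. 0)" "y \<in> L" "y \<noteq> (\<lambda>_. 0)"
    and split: "\<And>u. v i u = x u + y u" and "0 \<le> dot r x y"
  moreover have "v i = (\<lambda>t. x t + y t)" by (simp add: fun_eq_iff split)
  ultimately have "cut_vertex i" by (intro cut_vertex_if_nonneg_split[OF assms(1)])
  with assms(2) show False ..
qed

definition vspan :: "nat set \<Rightarrow> (nat \<Rightarrow> int) set" where
  "vspan X = range (\<lambda>c. lincomb X c v)"

lemma lincomb_in_vspan: "lincomb X c v \<in> vspan X"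
  by (simp add: vspan_def)

lemma v_in_vspan: "finite X \<Longrightarrow> i \<in> X \<Longrightarrow> v i \<in> vspan X"
  using lincomb_in_vspan[of X "\<lambda>s. of_bool (s = i)"] by (simp add: lincomb_indicator)

lemma vspan_add: "x \<in> vspan X \<Longrightarrow> y \<in> vspan X \<Longrightarrow> (\<lambda>t. x t + y t) \<in> vspan X"
  by (auto simp: vspan_def lincomb_add)

lemma vspan_scale: "x \<in> vspan X \<Longrightarrow> (\<lambda>t. a * x t) \<in> vspan X"
  by (auto simp: vspan_def lincomb_scale)

lemma vspan_diff: "x \<in> vspan X \<Longrightarrow> y \<in> vspan X \<Longrightarrow> (\<lambda>t. x t - y t) \<in> vspan X"
  using vspan_add[of x X "\<lambda>t. - 1 * y t"] vspan_scale[of y X "- 1"] by simp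

lemma vspan_lincomb:
  "finite I \<Longrightarrow> (\<And>q. q \<in> I \<Longrightarrow> g q \<in> vspan X) \<Longrightarrow> lincomb I c g \<in> vspan X"
proof (induction I rule: finite_induct)
  case empty
  then show ?case using lincomb_in_vspan[of X "\<lambda>_. 0"] by (simp add: lincomb_def)
next
  case (insert q I)
  then show ?case by (simp add: lincomb_insert vspan_add vspan_scale)
qed

lemma vspan_in_lattice: "X \<subseteq> {..k} \<Longrightarrow> vspan X \<subseteq> L"
  using v_in_lattice finite_subset[of X "{..k}"]
  by (auto simp: vspan_def intro!: lattice_lincomb)

context
  fixes i A B assumes cut: "cut i A B"
begin

lemma cut_parts: "i \<le> k" "A \<subseteq> {..k}" "B \<subseteq> {..k}" "A \<inter> B = {}" "i \<notin> A" "i \<notin> B"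
  "A \<union> B = {..k} - {i}" "finite A" "finite B"
  using cut finite_subset[of A "{..k}"] finite_subset[of B "{..k}"] by (auto simp: cut_def)

lemma cut_gram: "a \<in> A \<Longrightarrow> b \<in> B \<Longrightarrow> gram a b = 0"
  using cut by (simp add: cut_def)

lemma cut_orthogonal:
  assumes "x \<in> vspan A" "y \<in> vspan B" shows "dot r x y = 0"
proof -
  obtain c d where "x = lincomb A c v" "y = lincomb B d v" using assms by (auto simp: vspan_def)
  then show ?thesis by (simp add: dot_lincomb_lincomb cut_gram)
qed

lemma cut_vspan_inter:
  assumes "x \<in> vspan A" "x \<in> vspan B" shows "x = (\<lambda>_. 0)"
proof (rule dot_self_eq_0)
  show "x \<in> zvec r" using assms(1) vspan_in_lattice[OF cut_parts(2)] lattice_in_zvec by blast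
  show "dot r x x = 0" using cut_orthogonal[OF assms] .
qed

lemma cut_decompose:
  assumes "x \<in> L" shows "\<exists>p\<in>vspan A. \<exists>q\<in>vspan B. x = (\<lambda>t. p t + q t)"
proof -
  obtain c where "x = lincomb {..k} c v" using lattice_spanned assms by blast
  also have "\<dots> = lincomb {..k} (\<lambda>s. c s - c i * of_bool (s \<in> {..k})) v"
    using superbase_sum by (intro lincomb_shift_by_zero_sum[symmetric]) auto
  also have "\<dots> = lincomb (A \<union> B) (\<lambda>s. c s - c i * of_bool (s \<in> {..k})) v"
    using cut_parts by (intro lincomb_subset) auto
  also have "\<dots> = (\<lambda>t. lincomb A (\<lambda>s. c s - c i * of_bool (s \<in> {..k})) v t +
      lincomb B (\<lambda>s. c s - c i * of_bool (s \<in> {..k})) v t)"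
    using cut_parts by (intro lincomb_union) auto
  finally show ?thesis using lincomb_in_vspan by blast
qed

lemma irreducible_in_cut_side:
  assumes "irreducible_vec r L w" shows "w \<in> vspan A \<or> w \<in> vspan B"
proof (rule ccontr)
  assume side: "\<not> ?thesis"
  have "w \<in> L" using assms by (simp add: irreducible_vec_def)
  then obtain p q where pq: "p \<in> vspan A" "q \<in> vspan B" "w = (\<lambda>t. p t + q t)"
    using cut_decompose by blast
  have "p \<noteq> (\<lambda>_. 0)" "q \<noteq> (\<lambda>_. 0)" using side pq by auto
  moreover have "p \<in> L" "q \<in> L" using pq vspan_in_lattice cut_parts by blast+
  ultimately have "dot r p q \<le> - 1" using assms pq(3) by (auto simp: irreducible_vec_def)
  then show False using cut_orthogonal[OF pq(1,2)] by simp
qed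

lemma lattice_not_in_cut_side: "\<not> L \<subseteq> vspan A"
proof
  assume "L \<subseteq> vspan A"
  obtain b where b: "b \<in> B" using cut by (auto simp: cut_def)
  then have b_index: "b \<le> k" using cut_parts(3) by auto
  then have "v b \<in> vspan A" using \<open>L \<subseteq> vspan A\<close> v_in_lattice by auto
  moreover have "v b \<in> vspan B" using v_in_vspan[OF cut_parts(9) b] .
  ultimately have "v b = (\<lambda>_. 0)" by (rule cut_vspan_inter)
  with v_nonzero[OF b_index] show False ..
qed

lemma cut_side_sum_nonzero: "lincomb A (\<lambda>_. 1) v \<noteq> (\<lambda>_. 0)"
proof
  assume zero: "lincomb A (\<lambda>_. 1) v = (\<lambda>_. 0)"
  have "(\<Sum>a\<in>A. gram i a) = 0"
    using dot_lincomb_right[of r "v i" A "\<lambda>_. 1" v] zero by (simp add: dot_def)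
  moreover have "gram i a \<le> 0" if "a \<in> A" for a
    using gram_nonpos[of i a] that cut_parts(1,2,5) by blast
  ultimately have orth_i: "gram i a = 0" if "a \<in> A" for a
    using that cut_parts(8) by (intro sum_nonpos_eq_0[of A]) auto
  have "A = {} \<or> A = {..k}"
  proof (rule orthogonal_split_trivial[OF cut_parts(2)])
    fix a d assume "a \<in> A" "d \<in> {..k} - A"
    then have "d = i \<or> d \<in> B" using cut_parts by auto
    then show "gram a d = 0" using orth_i[OF \<open>a \<in> A\<close>] cut \<open>a \<in> A\<close>
      by (auto simp: dot_sym cut_def)
  qed
  then show False using cut cut_parts by (auto simp: cut_def)
qed

lemma cut_superbase_sum: "v i t + lincomb A (\<lambda>_. 1) v t + lincomb B (\<lambda>_. 1) v t = 0"
proof -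
  have "{..k} = insert i (A \<union> B)" using cut_parts by auto
  then have "lincomb {..k} (\<lambda>_. 1) v t = v i t + lincomb A (\<lambda>_. 1) v t + lincomb B (\<lambda>_. 1) v t"
    using cut_parts(4-6,8,9) by (simp add: lincomb_insert lincomb_union add.assoc)
  then show ?thesis using superbase_sum by simp
qed

end

lemma cut_vertex_not_in_side:
  assumes cut: "cut i A B" and cut': "cut j A' B'"
    and sub: "vspan A' \<subseteq> vspan A" "vspan B' \<subseteq> vspan B"
  shows "j \<notin> A"
proof
  assume "j \<in> A"
  then have "v j \<in> vspan A" using v_in_vspan cut_parts[OF cut] by blast
  moreover have "lincomb A' (\<lambda>_. 1) v \<in> vspan A" using sub(1) lincomb_in_vspan by blast
  ultimately have "(\<lambda>t. - 1 * v j t - lincomb A' (\<lambda>_. 1) v t) \<in> vspan A"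
    by (intro vspan_diff vspan_scale)
  moreover have "(\<lambda>t. - 1 * v j t - lincomb A' (\<lambda>_. 1) v t) = lincomb B' (\<lambda>_. 1) v"
  proof
    fix t show "- 1 * v j t - lincomb A' (\<lambda>_. 1) v t = lincomb B' (\<lambda>_. 1) v t"
      using cut_superbase_sum[OF cut', of t] by linarith
  qed
  moreover have "lincomb B' (\<lambda>_. 1) v \<in> vspan B" using sub(2) lincomb_in_vspan by blast
  ultimately show False
    using cut_vspan_inter[OF cut] cut_side_sum_nonzero[OF cut_sym[OF cut']] by auto
qed

lemma cut_vspans_determine_vertex:
  assumes cut: "cut i A B" and cut': "cut j A' B'"
    and "vspan A' \<subseteq> vspan A" "vspan B' \<subseteq> vspan B"
  shows "i = j"
proof -
  have "j \<notin> A" "j \<notin> B"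
    using cut_vertex_not_in_side[OF cut cut'] cut_vertex_not_in_side[OF cut_sym[OF cut] cut_sym[OF cut']]
      assms(3,4) by auto
  then show ?thesis using cut_parts[OF cut] cut_parts(1)[OF cut'] by auto
qed

lemma irreducible_basis_if_unique_cut_vertex:
  assumes unique: "\<And>i j. cut_vertex i \<Longrightarrow> cut_vertex j \<Longrightarrow> i = j"
  shows "card {i. i \<le> k \<and> reducible_vec r L (v i)} \<le> 1 \<and>
    (\<exists>j\<le>k. (\<forall>i\<le>k. i \<noteq> j \<longrightarrow> irreducible_vec r L (v i)) \<and> is_basis L ({..k} - {j}) v)"
proof -
  obtain j where j: "j \<le> k" and only_j: "\<And>i. cut_vertex i \<Longrightarrow> i = j"
  proof (cases "\<exists>i. cut_vertex i")
    case True
    then obtain j where "cut_vertex j" by blast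
    moreover from this have "j \<le> k" by (auto simp: cut_vertex_def cut_def)
    ultimately show ?thesis using that[of j] unique by blast
  qed blast
  have irreducible: "irreducible_vec r L (v i)" if "i \<le> k" "i \<noteq> j" for i
    using irreducible_if_not_cut_vertex only_j that by blast
  then have "{i. i \<le> k \<and> reducible_vec r L (v i)} \<subseteq> {j}" by (auto simp: reducible_vec_def)
  then have "card {i. i \<le> k \<and> reducible_vec r L (v i)} \<le> 1"
    using card_mono[of "{j}"] by simp
  moreover have "is_basis L ({..k} - {j}) v"
    using spans_without[OF j] lin_indep_without[OF j] by (simp add: is_basis_def)
  ultimately show ?thesis using j irreducible by blast
qed

end

section \<open>Cut vertices of superbases of changemaker lattices\<close>

locale changemaker_superbase = changemaker_lattice +
  fixes v :: "nat \<Rightarrow> nat \<Rightarrow> int"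
  assumes obtuse: "obtuse_superbase r (perp_lattice r \<sigma>) (r - 1) v"

sublocale changemaker_superbase \<subseteq> obtuse_superbase_lattice r "perp_lattice r \<sigma>" "r - 1" v
proof
  show "obtuse_superbase r \<Lambda> (r - 1) v" by (rule obtuse)
  show "\<Lambda> \<subseteq> zvec r" by (auto simp: perp_lattice_def)
  show "lincomb I c g \<in> \<Lambda>" if "finite I" "\<And>i. i \<in> I \<Longrightarrow> g i \<in> \<Lambda>" for I c g
    using lincomb_in_perp_lattice that .
  show "r - 1 \<le> card I" if "finite I" "\<And>x. x \<in> \<Lambda> \<Longrightarrow> \<exists>c. x = lincomb I c g" for I g
    using lattice_rank that .
  show "0 < r - 1" using two_le_r by simp
qed

context changemaker_superbase
begin

lemma std_vec_in_cut_side: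
  assumes cut: "cut i A B" and t: "t \<in> {1..<r}"
  shows "std_vec t \<in> vspan A \<longleftrightarrow> std_vec t \<notin> vspan B"
proof -
  have "std_vec t \<in> vspan A \<or> std_vec t \<in> vspan B"
    using irreducible_in_cut_side[OF cut] std_vec_irreducible t by auto
  moreover have "std_vec t \<noteq> (\<lambda>_. 0)" using std_vec_diag[of t] t fun_cong[of "std_vec t" "\<lambda>_. 0" t] by auto
  ultimately show ?thesis using cut_vspan_inter[OF cut] by blast
qed

lemma cut_side_respects_adjacency:
  assumes cut: "cut i A B" and st: "s \<in> {1..<r}" "t \<in> {1..<r}"
    and adjacent: "dot r (std_vec s) (std_vec t) \<noteq> 0"
  shows "std_vec s \<in> vspan A \<longleftrightarrow> std_vec t \<in> vspan A"
proof
  assume "std_vec s \<in> vspan A"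
  show "std_vec t \<in> vspan A"
  proof (rule ccontr)
    assume "std_vec t \<notin> vspan A"
    then have "std_vec t \<in> vspan B" using std_vec_in_cut_side[OF cut st(2)] by blast
    then show False using cut_orthogonal[OF cut \<open>std_vec s \<in> vspan A\<close>] adjacent by simp
  qed
next
  assume "std_vec t \<in> vspan A"
  show "std_vec s \<in> vspan A"
  proof (rule ccontr)
    assume "std_vec s \<notin> vspan A"
    then have "std_vec s \<in> vspan B" using std_vec_in_cut_side[OF cut st(1)] by blast
    then show False using cut_orthogonal[OF cut \<open>std_vec t \<in> vspan A\<close>] adjacent by (simp add: dot_sym)
  qed
qed

lemma lattice_in_vspan_if_std_vecs:
  "(\<And>t. t \<in> {1..<r} \<Longrightarrow> std_vec t \<in> vspan X) \<Longrightarrow> \<Lambda> \<subseteq> vspan X"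
  using std_span vspan_lincomb[of "{1..<r}"] by blast

lemma cut_separates_exc_index:
  assumes cut: "cut i A B"
  shows "(std_vec exc_index \<in> vspan A) \<noteq> (std_vec 1 \<in> vspan A)"
proof
  assume same: "(std_vec exc_index \<in> vspan A) = (std_vec 1 \<in> vspan A)"
  have side: "std_vec t \<in> vspan A \<longleftrightarrow> std_vec 1 \<in> vspan A" if "t \<in> {1..<r}" for t
    using std_graph_two_classes[of "\<lambda>t. std_vec t \<in> vspan A"] cut_side_respects_adjacency[OF cut]
      same that by blast
  show False
  proof (cases "std_vec 1 \<in> vspan A")
    case True
    then have "\<Lambda> \<subseteq> vspan A" using side by (intro lattice_in_vspan_if_std_vecs) blast
    then show False using lattice_not_in_cut_side[OF cut] by blast
  next
    case False
    then have "\<Lambda> \<subseteq> vspan B"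
      using side std_vec_in_cut_side[OF cut] by (intro lattice_in_vspan_if_std_vecs) blast
    then show False using lattice_not_in_cut_side[OF cut_sym[OF cut]] by blast
  qed
qed

definition std_side :: "nat set \<Rightarrow> nat set" where
  "std_side X = {t \<in> {1..<r}. std_vec t \<in> vspan X}"

lemma cut_side_eq_std_span:
  assumes cut: "cut i A B" shows "vspan A = range (\<lambda>c. lincomb (std_side A) c std_vec)"
proof (intro equalityI subsetI)
  fix x assume x: "x \<in> vspan A"
  then have "x \<in> \<Lambda>" using vspan_in_lattice cut_parts(2)[OF cut] by blast
  then obtain c where c: "x = lincomb {1..<r} c std_vec" using std_span by blast
  define J where "J = std_side A"
  have "{1..<r} = J \<union> ({1..<r} - J)" by (auto simp: J_def std_side_def)
  then have split: "x = (\<lambda>u. lincomb J c std_vec u + lincomb ({1..<r} - J) c std_vec u)"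
    unfolding c by (metis finite_atLeastLessThan finite_Un lincomb_union Diff_disjoint)
  have p: "lincomb J c std_vec \<in> vspan A"
    by (rule vspan_lincomb) (auto simp: J_def std_side_def)
  have "lincomb ({1..<r} - J) c std_vec \<in> vspan B"
    using std_vec_in_cut_side[OF cut] by (intro vspan_lincomb) (auto simp: J_def std_side_def)
  moreover have "lincomb ({1..<r} - J) c std_vec = (\<lambda>u. x u - lincomb J c std_vec u)"
    using split by (simp add: fun_eq_iff)
  then have "lincomb ({1..<r} - J) c std_vec \<in> vspan A" using vspan_diff[OF x p] by simp
  ultimately have "lincomb ({1..<r} - J) c std_vec = (\<lambda>_. 0)" using cut_vspan_inter[OF cut] by blast
  then have "x = lincomb J c std_vec" using split by simp
  then show "x \<in> range (\<lambda>c. lincomb (std_side A) c std_vec)" by (simp add: J_def)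
next
  fix x assume "x \<in> range (\<lambda>c. lincomb (std_side A) c std_vec)"
  then show "x \<in> vspan A" by (auto intro!: vspan_lincomb simp: std_side_def)
qed

lemma oriented_cuts_same_std_side:
  assumes cuts: "cut i A B" "cut j A' B'"
    and oriented: "std_vec 1 \<in> vspan A" "std_vec 1 \<in> vspan A'"
  shows "std_side A = std_side A'"
proof -
  let ?Q = "\<lambda>t. std_vec t \<in> vspan A \<longleftrightarrow> std_vec t \<in> vspan A'"
  have "std_vec exc_index \<notin> vspan A" "std_vec exc_index \<notin> vspan A'"
    using cut_separates_exc_index cuts oriented by blast+
  then have "?Q exc_index = ?Q 1" using oriented by simp
  moreover have "?Q s = ?Q t"
    if "s \<in> {1..<r}" "t \<in> {1..<r}" "dot r (std_vec s) (std_vec t) \<noteq> 0" for s t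
    using cut_side_respects_adjacency[OF cuts(1) that] cut_side_respects_adjacency[OF cuts(2) that]
    by blast
  ultimately have "?Q t" if "t \<in> {1..<r}" for t
    using std_graph_two_classes[of ?Q t] that oriented by blast
  then show ?thesis by (auto simp: std_side_def)
qed

lemma std_side_complement: "cut i A B \<Longrightarrow> std_side B = {1..<r} - std_side A"
  using std_vec_in_cut_side by (auto simp: std_side_def)

lemma oriented_cut_exists:
  assumes "cut_vertex i" shows "\<exists>A B. cut i A B \<and> std_vec 1 \<in> vspan A"
proof -
  from assms obtain A B where cut: "cut i A B" unfolding cut_vertex_def by blast
  have "1 \<in> {1..<r}" using two_le_r by simp
  show ?thesis
  proof (cases "std_vec 1 \<in> vspan A")
    case False
    then have "std_vec 1 \<in> vspan B" using std_vec_in_cut_side[OF cut \<open>1 \<in> {1..<r}\<close>] by blast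
    then show ?thesis using cut_sym[OF cut] by blast
  qed (use cut in blast)
qed

lemma at_most_one_cut_vertex:
  assumes "cut_vertex i" "cut_vertex j" shows "i = j"
proof -
  obtain A B where cut: "cut i A B" and A: "std_vec 1 \<in> vspan A"
    using oriented_cut_exists[OF assms(1)] by blast
  obtain A' B' where cut': "cut j A' B'" and A': "std_vec 1 \<in> vspan A'"
    using oriented_cut_exists[OF assms(2)] by blast
  have "std_side A' = std_side A" using oriented_cuts_same_std_side[OF cut cut' A A'] by simp
  moreover have "std_side B' = std_side B"
    using calculation std_side_complement[OF cut] std_side_complement[OF cut'] by simp
  ultimately have "vspan A' = vspan A" "vspan B' = vspan B"
    using cut_side_eq_std_span[OF cut] cut_side_eq_std_span[OF cut']
      cut_side_eq_std_span[OF cut_sym[OF cut]] cut_side_eq_std_span[OF cut_sym[OF cut']]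
    by simp_all
  then show ?thesis using cut_vspans_determine_vertex[OF cut cut'] by simp
qed

end

theorem lemma4p5:
  fixes r :: nat and \<sigma> :: "nat \<Rightarrow> int" and v :: "nat \<Rightarrow> nat \<Rightarrow> int"
  assumes "changemaker r \<sigma>"
    and "\<sigma> (r - 1) \<ge> 2"
    and "obtuse_superbase r (perp_lattice r \<sigma>) (r - 1) v"
  shows "card {i. i \<le> r - 1 \<and> reducible_vec r (perp_lattice r \<sigma>) (v i)} \<le> 1 \<and>
    (\<exists>j\<le>r - 1. (\<forall>i\<le>r - 1. i \<noteq> j \<longrightarrow> irreducible_vec r (perp_lattice r \<sigma>) (v i)) \<and>
        is_basis (perp_lattice r \<sigma>) ({..r - 1} - {j}) v)"
proof -
  have "2 \<le> r"
  proof (rule ccontr)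
    assume "\<not> 2 \<le> r"
    with assms(1) have "\<sigma> (r - 1) = 1" by (auto simp: changemaker_def)
    with assms(2) show False by simp
  qed
  with assms(1,3) interpret changemaker_superbase r \<sigma> v by unfold_locales
  show ?thesis by (rule irreducible_basis_if_unique_cut_vertex[OF at_most_one_cut_vertex])
qed

end
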